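(* For every integer $m\ge1$, the binary reflected Gray code ${\boldsymbol{B}}_m$ and the natural binary code ${\boldsymbol{N}}_m$ of order $m$ belong to the same modified Hadamard class.
   Context: Let $M=2^m$. The natural binary code (NBC) of order $m$ is the $M\times m$ binary matrix ${\boldsymbol{N}}_m$ whose $q$th row $\boldsymbol{n}_q=[n_{q,1},\ldots,n_{q,m}]$ is the base-2 representation of $q-1$, with $n_{q,m}$ the least significant bit. The binary reflected Gray code (BRGC) of order $m$ is the $M\times m$ matrix ${\boldsymbol{B}}_m$ with rows $\boldsymbol{b}_q$ given by $b_{q,1}=n_{q,1}$ and $b_{q,l}=n_{q,l-1}\oplus n_{q,l}$ for $l=2,\ldots,m$. A labeling is an $M\times m$ binary matrix with pairwise distinct rows; its columns are then nonzero. The first nonzero entry of a column is its pivot. A binary labeling matrix ${\boldsymbol{L}}$ is a reduced column echelon matrix if (1) every row containing a pivot has all its other entries zero, and (2) the pivot of column $l$ lies in a row below the pivot of column $l+1$, for $l=1,\ldots,m-1$. Every labeling ${\boldsymbol{L}}$ factors uniquely as ${\boldsymbol{L}}={\boldsymbol{L}}_{\mathrm{R}}{\boldsymbol{T}}$ with ${\boldsymbol{L}}_{\mathrm{R}}$ a reduced column echelon matrix and ${\boldsymbol{T}}$ an invertible $m\times m$ binary matrix (over GF(2)). The modified Hadamard class associated with a reduced column echelon matrix ${\boldsymbol{L}}_{\mathrm{R}}$ is the set $\{{\boldsymbol{L}}_{\mathrm{R}}{\boldsymbol{T}}:{\boldsymbol{T}}\text{ invertible }m\times m\text{ binary}\}$.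 *)

theory Defs
  imports Main
begin

text \<open>Binary matrices are represented as functions nat \<Rightarrow> nat \<Rightarrow> bool
  (True = 1, False = 0), with 0-based row and column indices; only entries
  inside the stated dimensions are meaningful. Row q (0 \<le> q < 2^m) corresponds
  to the paper's row q+1, column j (0 \<le> j < m) to the paper's column j+1.\<close>

type_synonym bmat = "nat \<Rightarrow> nat \<Rightarrow> bool"

definition NBC :: "nat \<Rightarrow> bmat" where
  "NBC m q j = odd (q div 2 ^ (m - 1 - j))"

definition BRGC :: "nat \<Rightarrow> bmat" where
  "BRGC m q j = (if j = 0 then NBC m q 0 else (NBC m q (j - 1) \<noteq> NBC m q j))"

definition gf2_mult :: "nat \<Rightarrow> bmat \<Rightarrow> bmat \<Rightarrow> bmat" where
  "gf2_mult k A B i j = odd (card {t. t < k \<and> A i t \<and> B t j})"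

definition gf2_id :: bmat where
  "gf2_id i j = (i = j)"

definition gf2_invertible :: "nat \<Rightarrow> bmat \<Rightarrow> bool" where
  "gf2_invertible m T \<longleftrightarrow> (\<exists>S. (\<forall>i<m. \<forall>j<m. gf2_mult m T S i j = gf2_id i j) \<and>
                                  (\<forall>i<m. \<forall>j<m. gf2_mult m S T i j = gf2_id i j))"

definition is_labeling :: "nat \<Rightarrow> bmat \<Rightarrow> bool" where
  "is_labeling m L \<longleftrightarrow>
     (\<forall>q<2^m. \<forall>q'<2^m. q \<noteq> q' \<longrightarrow> (\<exists>j<m. L q j \<noteq> L q' j))"

definition pivot :: "bmat \<Rightarrow> nat \<Rightarrow> nat" where
  "pivot L j = (LEAST q. L q j)"

definition reduced_col_echelon :: "nat \<Rightarrow> bmat \<Rightarrow> bool" where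
  "reduced_col_echelon m L \<longleftrightarrow>
     is_labeling m L \<and>
     (\<forall>j<m. \<forall>j'<m. j' \<noteq> j \<longrightarrow> \<not> L (pivot L j) j') \<and>
     (\<forall>j. j + 1 < m \<longrightarrow> pivot L (j + 1) < pivot L j)"

definition in_modified_hadamard_class :: "nat \<Rightarrow> bmat \<Rightarrow> bmat \<Rightarrow> bool" where
  "in_modified_hadamard_class m LR L \<longleftrightarrow>
     (\<exists>T. gf2_invertible m T \<and> (\<forall>q<2^m. \<forall>j<m. L q j = gf2_mult m LR T q j))"

end

theory Submission
  imports Defs
begin

text \<open>The natural binary code is already a reduced column echelon matrix: its column j
  has pivot 2^(m-1-j), the row of a single one. The BRGC is obtained from it by the
  bidiagonal matrix that XORs each column into the next one, which is invertible over
  GF(2) (its inverse is the upper triangular all-ones matrix, taking prefix XORs). Hence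
  both codes lie in the modified Hadamard class of the NBC.\<close>

lemma nat_eq_if_low_bits_eq:
  fixes q q' :: nat
  assumes "q < 2^m" "q' < 2^m" and "\<And>k. k < m \<Longrightarrow> odd (q div 2^k) \<longleftrightarrow> odd (q' div 2^k)"
  shows "q = q'"
proof -
  have "take_bit m q = take_bit m q'"
    by (rule bit_eqI) (auto simp: bit_take_bit_iff bit_iff_odd[symmetric] assms(3)[folded bit_iff_odd])
  then show ?thesis using assms(1,2) by (simp add: take_bit_nat_eq_self)
qed

lemma odd_power_div_power_iff: "odd ((2::nat)^k div 2^l) \<longleftrightarrow> k = l"
  using bit_iff_odd[of "2^k::nat" l] by (auto simp: bit_exp_iff)

lemma is_labeling_NBC: "is_labeling m (NBC m)"
  unfolding is_labeling_def
proof (intro allI impI)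
  fix q q' :: nat assume "q < 2^m" "q' < 2^m" "q \<noteq> q'"
  then obtain k where k: "k < m" "odd (q div 2^k) \<noteq> odd (q' div 2^k)"
    using nat_eq_if_low_bits_eq by blast
  then have "m - 1 - (m - 1 - k) = k" by simp
  with k show "\<exists>j<m. NBC m q j \<noteq> NBC m q' j"
    unfolding NBC_def by (metis diff_less_Suc less_trans_Suc Suc_pred' gr_zeroI less_zeroE)
qed

lemma pivot_NBC: "pivot (NBC m) j = 2^(m-1-j)"
  unfolding pivot_def NBC_def
proof (rule Least_equality)
  fix q :: nat assume "odd (q div 2^(m-1-j))"
  then show "2^(m-1-j) \<le> q"
    by (metis div_less linorder_not_le even_zero)
qed simp

lemma reduced_col_echelon_NBC: "reduced_col_echelon m (NBC m)"
  unfolding reduced_col_echelon_def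
proof (intro conjI allI impI is_labeling_NBC)
  fix j j' assume "j < m" "j' < m" "j' \<noteq> j"
  then have "m - 1 - j' \<noteq> m - 1 - j" by arith
  then show "\<not> NBC m (pivot (NBC m) j) j'"
    by (simp add: pivot_NBC NBC_def odd_power_div_power_iff)
next
  fix j assume "j + 1 < m"
  then show "pivot (NBC m) (j + 1) < pivot (NBC m) j"
    by (simp add: pivot_NBC)
qed

lemma gf2_mult_id_right: "j < m \<Longrightarrow> gf2_mult m A gf2_id q j = A q j"
proof -
  assume "j < m"
  then have "{t. t < m \<and> A q t \<and> gf2_id t j} = (if A q j then {j} else {})"
    by (auto simp: gf2_id_def)
  then show ?thesis by (simp add: gf2_mult_def)
qed

lemma gf2_invertible_id: "gf2_invertible m gf2_id"
  unfolding gf2_invertible_def by (rule exI[of _ gf2_id]) (simp add: gf2_mult_id_right)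

lemma in_modified_hadamard_class_self: "in_modified_hadamard_class m L L"
  unfolding in_modified_hadamard_class_def
  using gf2_invertible_id gf2_mult_id_right by metis

definition gray_transform :: bmat where
  "gray_transform t j \<longleftrightarrow> t = j \<or> (j \<ge> 1 \<and> t = j - 1)"

definition upper_ones :: bmat where
  "upper_ones t j \<longleftrightarrow> t \<le> j"

lemma gf2_invertible_gray_transform: "gf2_invertible m gray_transform"
  unfolding gf2_invertible_def
proof (rule exI[of _ upper_ones], intro conjI allI impI)
  fix i j assume "i < m" "j < m"
  then have "{t. t < m \<and> gray_transform i t \<and> upper_ones t j} =
             (if i > j then {} else if i = j then {i} else {i, i+1})"
    by (auto simp: gray_transform_def upper_ones_def)
  then show "gf2_mult m gray_transform upper_ones i j = gf2_id i j"
    by (simp add: gf2_mult_def gf2_id_def)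
next
  fix i j assume "i < m" "j < m"
  then have "{t. t < m \<and> upper_ones i t \<and> gray_transform t j} =
             (if i > j then {} else if i = j then {j} else {j - 1, j})"
    by (auto simp: gray_transform_def upper_ones_def)
  then show "gf2_mult m upper_ones gray_transform i j = gf2_id i j"
    by (auto simp: gf2_mult_def gf2_id_def)
qed

lemma BRGC_eq_NBC_mult_gray_transform:
  assumes "j < m"
  shows "BRGC m q j = gf2_mult m (NBC m) gray_transform q j"
proof (cases "j = 0")
  case True
  with assms have "{t. t < m \<and> NBC m q t \<and> gray_transform t j} = (if NBC m q 0 then {0} else {})"
    by (auto simp: gray_transform_def)
  with True show ?thesis by (simp add: gf2_mult_def BRGC_def)
next
  case False
  with assms have "{t. t < m \<and> NBC m q t \<and> gray_transform t j} =
     (if NBC m q j then {j} else {}) \<union> (if NBC m q (j - 1) then {j - 1} else {})"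
    by (auto simp: gray_transform_def)
  with False show ?thesis by (auto simp: gf2_mult_def BRGC_def)
qed

lemma in_modified_hadamard_class_NBC_BRGC: "in_modified_hadamard_class m (NBC m) (BRGC m)"
  unfolding in_modified_hadamard_class_def
  using gf2_invertible_gray_transform BRGC_eq_NBC_mult_gray_transform by blast

theorem theorem3:
  fixes m :: nat
  assumes "m \<ge> 1"
  shows "\<exists>LR. reduced_col_echelon m LR \<and>
              in_modified_hadamard_class m LR (BRGC m) \<and>
              in_modified_hadamard_class m LR (NBC m)"
  using reduced_col_echelon_NBC in_modified_hadamard_class_NBC_BRGC
    in_modified_hadamard_class_self by blast

end
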